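(* Let $B$ be an $n\times n$ matrix of non-negative integers whose last $n-m$ rows are zero. Suppose that $J_{nm}+B$ is irreducible and that its top-left $m\times m$ corner is irreducible. Suppose $B'$ is formed from $B$ in one of two ways: - by adding some column of $B$ to a different column; or - by adding some non-zero row of $B$ to a different non-zero row. Then $J_{nm}+B\sim_M J_{nm}+B'$.
   Context: $J_{nm}$ ($0\le m\le n$) is the $n\times n$ matrix whose $i$-th row, for $i\le m$, has a $1$ in position $i$ and $0$ elsewhere, and whose last $n-m$ rows consist entirely of $\infty$. Arithmetic convention: $\infty+a=\infty$. For an $X\times X$ matrix $A$ with entries in $\{0,1,2,\dots\}\cup\{\infty\}$, $G_A$ is the graph with vertex set $X$ and exactly $A(x,y)$ edges from $x$ to $y$. A matrix $A$ is irreducible if $G_A$ is strongly connected. For matrices, $A\sim_M B$ means $G_A\sim_M G_B$. A graph may have multiple edges and loops. A source receives no edges, a sink emits no edges, and an infinite emitter emits infinitely many edges. A vertex is singular if it is a sink or infinite emitter, and regular otherwise. Move-equivalence $\sim_M$ is the smallest equivalence relation on graphs with finitely many vertices such that $G\sim_M E$ whenever $E$ is isomorphic to a graph obtained from $G$ by one of the following moves. (S) Delete a regular source together with the edges it emits. (R) For a regular vertex $u$ emitting exactly one edge $f$, with $r(f)\neq u$, and all of whose incoming edges have the same source $v$: delete $u$, $f$ and the edges into $u$, and add for each $e\in r^{-1}(u)$ an edge $[ef]$ from $v$ to $r(f)$. (O) Out-splitting at a non-sink $v$ along a partition $\mathcal E_1,\dots,\mathcal E_n$ of $s^{-1}(v)$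 with at most one infinite part. Replace $v$ by $v^1,\dots,v^n$. Each edge $e$ into $v$ becomes copies $e^1,\dots,e^n$ with $r(e^i)=v^i$ and source $s(e)$, or source $v^j$ if $s(e)=v$ and $e\in\mathcal E_j$. An edge from $v$ to $w\neq v$ lying in $\mathcal E_i$ gets source $v^i$. (I) In-splitting at a regular non-source $v$ along a partition $\mathcal E_1,\dots,\mathcal E_n$ of $r^{-1}(v)$. Replace $v$ by $v^1,\dots,v^n$. Each edge $e$ out of $v$ becomes copies $e^1,\dots,e^n$ with $s(e^i)=v^i$ and range $r(e)$, or range $v^j$ if $r(e)=v$ and $e\in\mathcal E_j$. An edge into $v$ from $w\neq v$ lying in $\mathcal E_i$ gets range $v^i$. *)

theory Defs
  imports Main "HOL-Library.Extended_Nat" "HOL-Library.Nat_Bijection"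
begin

datatype ('v,'e) dgraph =
  DGraph (gverts: "'v set") (gedges: "'e set") (gsrc: "'e \<Rightarrow> 'v") (grng: "'e \<Rightarrow> 'v")

definition wf_graph :: "('v,'e) dgraph \<Rightarrow> bool" where
  "wf_graph G \<longleftrightarrow> finite (gverts G) \<and>
     (\<forall>e\<in>gedges G. gsrc G e \<in> gverts G \<and> grng G e \<in> gverts G)"

definition graph_iso :: "('v,'e) dgraph \<Rightarrow> ('w,'f) dgraph \<Rightarrow> bool" where
  "graph_iso G H \<longleftrightarrow> (\<exists>\<phi> \<psi>. bij_betw \<phi> (gverts G) (gverts H) \<and> bij_betw \<psi> (gedges G) (gedges H) \<and>
     (\<forall>e\<in>gedges G. gsrc H (\<psi> e) = \<phi> (gsrc G e) \<and> grng H (\<psi> e) = \<phi> (grng G e)))"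

definition emitted :: "('v,'e) dgraph \<Rightarrow> 'v \<Rightarrow> 'e set" where
  "emitted G v = {e \<in> gedges G. gsrc G e = v}"

definition received :: "('v,'e) dgraph \<Rightarrow> 'v \<Rightarrow> 'e set" where
  "received G v = {e \<in> gedges G. grng G e = v}"

definition is_source :: "('v,'e) dgraph \<Rightarrow> 'v \<Rightarrow> bool" where
  "is_source G v \<longleftrightarrow> received G v = {}"

definition is_sink :: "('v,'e) dgraph \<Rightarrow> 'v \<Rightarrow> bool" where
  "is_sink G v \<longleftrightarrow> emitted G v = {}"

definition is_inf_emitter :: "('v,'e) dgraph \<Rightarrow> 'v \<Rightarrow> bool" where
  "is_inf_emitter G v \<longleftrightarrow> infinite (emitted G v)"

definition is_regular :: "('v,'e) dgraph \<Rightarrow> 'v \<Rightarrow> bool" where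
  "is_regular G v \<longleftrightarrow> \<not> is_sink G v \<and> \<not> is_inf_emitter G v"

definition S_ok :: "('v,'e) dgraph \<Rightarrow> 'v \<Rightarrow> bool" where
  "S_ok G u \<longleftrightarrow> u \<in> gverts G \<and> is_regular G u \<and> is_source G u"

definition S_move :: "('v,'e) dgraph \<Rightarrow> 'v \<Rightarrow> ('v,'e) dgraph" where
  "S_move G u = DGraph (gverts G - {u}) (gedges G - emitted G u) (gsrc G) (grng G)"

definition R_ok :: "('v,'e) dgraph \<Rightarrow> 'v \<Rightarrow> 'e \<Rightarrow> 'v \<Rightarrow> bool" where
  "R_ok G u f v \<longleftrightarrow> u \<in> gverts G \<and> v \<in> gverts G \<and> is_regular G u \<and> emitted G u = {f} \<and>
     grng G f \<noteq> u \<and> (\<forall>e\<in>received G u. gsrc G e = v)"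

text \<open>Old edges are tagged Inl; the new edge [ef] for e into u is Inr e.\<close>
definition R_move :: "('v,'e) dgraph \<Rightarrow> 'v \<Rightarrow> 'e \<Rightarrow> 'v \<Rightarrow> ('v, 'e + 'e) dgraph" where
  "R_move G u f v = DGraph (gverts G - {u})
     (Inl ` (gedges G - {f} - received G u) \<union> Inr ` received G u)
     (\<lambda>x. case x of Inl e \<Rightarrow> gsrc G e | Inr e \<Rightarrow> v)
     (\<lambda>x. case x of Inl e \<Rightarrow> grng G e | Inr e \<Rightarrow> grng G f)"

text \<open>A partition of s^{-1}(v) into n (non-empty) parts is given by a labelling p with values < n,
  every label being attained.  Vertex w \<noteq> v is (w,0); the copies of v are (v,i), i<n.
  An edge e not into v is (e,0); the copies of an edge into v are (e,i), i<n.\<close>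
definition O_ok :: "('v,'e) dgraph \<Rightarrow> 'v \<Rightarrow> nat \<Rightarrow> ('e \<Rightarrow> nat) \<Rightarrow> bool" where
  "O_ok G v n p \<longleftrightarrow> v \<in> gverts G \<and> \<not> is_sink G v \<and>
     (\<forall>e\<in>emitted G v. p e < n) \<and> (\<forall>i<n. \<exists>e\<in>emitted G v. p e = i) \<and>
     card {i. i < n \<and> infinite {e\<in>emitted G v. p e = i}} \<le> 1"

definition O_move :: "('v,'e) dgraph \<Rightarrow> 'v \<Rightarrow> nat \<Rightarrow> ('e \<Rightarrow> nat) \<Rightarrow> ('v \<times> nat, 'e \<times> nat) dgraph" where
  "O_move G v n p = DGraph
     ({(w,0) | w. w \<in> gverts G \<and> w \<noteq> v} \<union> {(v,i) | i. i < n})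
     ({(e,0) | e. e \<in> gedges G \<and> grng G e \<noteq> v} \<union> {(e,i) | e i. e \<in> gedges G \<and> grng G e = v \<and> i < n})
     (\<lambda>(e,i). if gsrc G e = v then (v, p e) else (gsrc G e, 0))
     (\<lambda>(e,i). if grng G e = v then (v, i) else (grng G e, 0))"

definition I_ok :: "('v,'e) dgraph \<Rightarrow> 'v \<Rightarrow> nat \<Rightarrow> ('e \<Rightarrow> nat) \<Rightarrow> bool" where
  "I_ok G v n p \<longleftrightarrow> v \<in> gverts G \<and> is_regular G v \<and> \<not> is_source G v \<and>
     (\<forall>e\<in>received G v. p e < n) \<and> (\<forall>i<n. \<exists>e\<in>received G v. p e = i)"

definition I_move :: "('v,'e) dgraph \<Rightarrow> 'v \<Rightarrow> nat \<Rightarrow> ('e \<Rightarrow> nat) \<Rightarrow> ('v \<times> nat, 'e \<times> nat) dgraph" where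
  "I_move G v n p = DGraph
     ({(w,0) | w. w \<in> gverts G \<and> w \<noteq> v} \<union> {(v,i) | i. i < n})
     ({(e,0) | e. e \<in> gedges G \<and> gsrc G e \<noteq> v} \<union> {(e,i) | e i. e \<in> gedges G \<and> gsrc G e = v \<and> i < n})
     (\<lambda>(e,i). if gsrc G e = v then (v, i) else (gsrc G e, 0))
     (\<lambda>(e,i). if grng G e = v then (v, p e) else (grng G e, 0))"

text \<open>Graphs are taken in the universe of graphs with vertices and edges in nat
  (finitely many vertices, countably many edges); all moves preserve countability of edges.\<close>
type_synonym graph = "(nat, nat) dgraph"

definition move_step :: "graph \<Rightarrow> graph \<Rightarrow> bool" where
  "move_step G H \<longleftrightarrow> wf_graph G \<and> wf_graph H \<and>
     ((\<exists>u. S_ok G u \<and> graph_iso (S_move G u) H) \<or>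
      (\<exists>u f v. R_ok G u f v \<and> graph_iso (R_move G u f v) H) \<or>
      (\<exists>v n p. O_ok G v n p \<and> graph_iso (O_move G v n p) H) \<or>
      (\<exists>v n p. I_ok G v n p \<and> graph_iso (I_move G v n p) H))"

definition move_equiv :: "graph \<Rightarrow> graph \<Rightarrow> bool" (infix "\<sim>\<^sub>M" 50) where
  "G \<sim>\<^sub>M H \<longleftrightarrow> equivclp move_step G H"

text \<open>An n \<times> n matrix with entries in {0,1,...} \<union> {\<infinity>} is a function nat \<Rightarrow> nat \<Rightarrow> enat;
  only entries with indices < n matter (index set X = {0..<n}).\<close>

definition graph_of_matrix :: "nat \<Rightarrow> (nat \<Rightarrow> nat \<Rightarrow> enat) \<Rightarrow> graph" where
  "graph_of_matrix n A = DGraph {0..<n}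
     {prod_encode (x, prod_encode (y, k)) | x y k. x < n \<and> y < n \<and> enat k < A x y}
     (\<lambda>e. fst (prod_decode e))
     (\<lambda>e. fst (prod_decode (snd (prod_decode e))))"

definition strongly_connected :: "('v,'e) dgraph \<Rightarrow> bool" where
  "strongly_connected G \<longleftrightarrow>
     (\<forall>x\<in>gverts G. \<forall>y\<in>gverts G. (x, y) \<in> {(gsrc G e, grng G e) | e. e \<in> gedges G}\<^sup>*)"

definition irreducible_mat :: "nat \<Rightarrow> (nat \<Rightarrow> nat \<Rightarrow> enat) \<Rightarrow> bool" where
  "irreducible_mat n A \<longleftrightarrow> strongly_connected (graph_of_matrix n A)"

definition mat_move_equiv :: "nat \<Rightarrow> (nat \<Rightarrow> nat \<Rightarrow> enat) \<Rightarrow> (nat \<Rightarrow> nat \<Rightarrow> enat) \<Rightarrow> bool" where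
  "mat_move_equiv n A A' \<longleftrightarrow> graph_of_matrix n A \<sim>\<^sub>M graph_of_matrix n A'"

text \<open>J_{nm} (0-indexed): row i < m is the i-th unit row, rows i \<ge> m are all \<infinity>.\<close>
definition J_mat :: "nat \<Rightarrow> nat \<Rightarrow> nat \<Rightarrow> nat \<Rightarrow> enat" where
  "J_mat n m i j = (if i < m then (if i = j then 1 else 0) else \<infinity>)"

definition JplusB :: "nat \<Rightarrow> nat \<Rightarrow> (nat \<Rightarrow> nat \<Rightarrow> nat) \<Rightarrow> nat \<Rightarrow> nat \<Rightarrow> enat" where
  "JplusB n m B i j = J_mat n m i j + enat (B i j)"

definition add_column :: "(nat \<Rightarrow> nat \<Rightarrow> nat) \<Rightarrow> nat \<Rightarrow> nat \<Rightarrow> nat \<Rightarrow> nat \<Rightarrow> nat" where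
  "add_column B c d = (\<lambda>i j. if j = d then B i j + B i c else B i j)"

definition add_row :: "(nat \<Rightarrow> nat \<Rightarrow> nat) \<Rightarrow> nat \<Rightarrow> nat \<Rightarrow> nat \<Rightarrow> nat \<Rightarrow> nat" where
  "add_row B a b = (\<lambda>i j. if i = b then B i j + B a j else B i j)"

definition nonzero_row :: "nat \<Rightarrow> (nat \<Rightarrow> nat \<Rightarrow> nat) \<Rightarrow> nat \<Rightarrow> bool" where
  "nonzero_row n B a \<longleftrightarrow> (\<exists>j<n. B a j \<noteq> 0)"

end

theory Submission
  imports Defs "HOL-Library.Countable_Set" "HOL-Library.Disjoint_Sets"
begin

text \<open>
  To add column c to column d of J + B, an out-splitting at c gives a single edge c \<rightarrow> d its own
  copy c' of c.  Then c' emits one edge, to d, and alternating in-splittings at c' and (R) moves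
  delete c' while redirecting each edge into c' to d.  As c' receives the edges into c, this adds
  column c to column d; the edge c \<rightarrow> d consumed by the splitting is made up for by the loop of J
  at c.  Dually, an in-splitting at a separating one edge b \<rightarrow> a, followed by out-splittings and
  (R) moves, adds row a to row b.

  This needs an edge c \<rightarrow> d (resp. b \<rightarrow> a).  In general irreducibility provides a path from c
  to d, and an induction on its length reduces to single edges, because adding column x to
  column d turns every edge y \<rightarrow> x into an edge y \<rightarrow> d.
\<close>

definition ecard :: "'a set \<Rightarrow> enat" where
  "ecard S = (if finite S then enat (card S) else \<infinity>)"

lemma ecard_empty [simp]: "ecard {} = 0"
  by (simp add: ecard_def zero_enat_def)

lemma ecard_image: "inj_on f S \<Longrightarrow> ecard (f ` S) = ecard S"
  by (simp add: ecard_def finite_image_iff card_image)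

lemma ecard_Un_disjoint: "S \<inter> T = {} \<Longrightarrow> ecard (S \<union> T) = ecard S + ecard T"
  by (auto simp: ecard_def card_Un_disjoint)

lemma ecard_Plus: "ecard (S <+> T) = ecard S + ecard T"
  unfolding Plus_def by (subst ecard_Un_disjoint) (auto simp: ecard_image)

lemma ecard_less: "ecard {k. enat k < N} = N"
proof (cases N)
  case (enat n)
  then have "{k. enat k < N} = {..<n}" by auto
  then show ?thesis using enat by (simp add: ecard_def)
qed (simp add: ecard_def)

text \<open>The number of k < A with k \<ge> P.  This is A - P, except that \<infinity> - \<infinity> = \<infinity> for enat.\<close>
definition ediff :: "enat \<Rightarrow> enat \<Rightarrow> enat" where
  "ediff A P = (if P = \<infinity> then 0 else A - P)"

lemma ediff_self [simp]: "ediff A A = 0"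
  by (cases A) (auto simp: ediff_def zero_enat_def)

lemma ediff_zero [simp]: "ediff A 0 = A"
  by (simp add: ediff_def)

lemma ecard_less_not_less: "ecard {k. enat k < A \<and> \<not> enat k < P} = ediff A P"
proof (cases P)
  case (enat p)
  show ?thesis
  proof (cases A)
    case (enat a)
    then have "{k. enat k < A \<and> \<not> enat k < P} = {p..<a}" using \<open>P = enat p\<close> by auto
    then show ?thesis using \<open>A = enat a\<close> \<open>P = enat p\<close> by (simp add: ecard_def ediff_def)
  next
    case infinity
    then have "{k. enat k < A \<and> \<not> enat k < P} = {p..}" using \<open>P = enat p\<close> by auto
    then show ?thesis using infinity \<open>P = enat p\<close> infinite_Ici by (simp add: ecard_def ediff_def)
  qed
qed (simp add: ediff_def)

lemma bij_betw_if_ecard_eq: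
  assumes "countable S" "countable T" "ecard S = ecard T"
  shows "\<exists>f. bij_betw f S T"
proof (cases "finite S")
  case True
  then have "finite T" "card S = card T" using assms(3) by (auto simp: ecard_def split: if_splits)
  then show ?thesis using True by (metis bij_betw_iff_card)
next
  case False
  then have "infinite T" using assms(3) by (auto simp: ecard_def split: if_splits)
  have "bij_betw (to_nat_on S) S UNIV" using False assms(1) by (simp add: to_nat_on_infinite)
  moreover have "bij_betw (to_nat_on T) T UNIV" using \<open>infinite T\<close> assms(2) by (simp add: to_nat_on_infinite)
  ultimately have "bij_betw (inv_into T (to_nat_on T) \<circ> to_nat_on S) S T"
    using bij_betw_inv_into bij_betw_trans by blast
  then show ?thesis by blast
qed

definition edges_between :: "('v,'e) dgraph \<Rightarrow> 'v \<Rightarrow> 'v \<Rightarrow> 'e set" where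
  "edges_between G x y = {e \<in> gedges G. gsrc G e = x \<and> grng G e = y}"

definition edge_mult :: "('v,'e) dgraph \<Rightarrow> 'v \<Rightarrow> 'v \<Rightarrow> enat" where
  "edge_mult G x y = ecard (edges_between G x y)"

lemma graph_iso_if_edge_mult_eq:
  fixes G :: "('v,'e::countable) dgraph" and H :: "('w,'f::countable) dgraph"
  assumes wfG: "wf_graph G" and wfH: "wf_graph H"
    and \<phi>: "bij_betw \<phi> (gverts G) (gverts H)"
    and mult: "\<And>x y. x \<in> gverts G \<Longrightarrow> y \<in> gverts G \<Longrightarrow> edge_mult G x y = edge_mult H (\<phi> x) (\<phi> y)"
  shows "graph_iso G H"
proof -
  let ?V = "gverts G \<times> gverts G"
  let ?E = "\<lambda>(x, y). edges_between G x y" and ?F = "\<lambda>(x, y). edges_between H (\<phi> x) (\<phi> y)"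
  have "\<exists>f. bij_betw f (?E p) (?F p)" if "p \<in> ?V" for p
    using that mult[of "fst p" "snd p"]
    by (auto simp: edge_mult_def intro!: bij_betw_if_ecard_eq countableI_type)
  then obtain \<beta> where \<beta>: "\<And>p. p \<in> ?V \<Longrightarrow> bij_betw (\<beta> p) (?E p) (?F p)"
    by metis
  define \<psi> where "\<psi> e = \<beta> (gsrc G e, grng G e) e" for e
  have "bij_betw \<psi> (?E p) (?F p)" if "p \<in> ?V" for p
    using \<beta>[OF that] by (rule bij_betw_cong[THEN iffD1, rotated]) (auto simp: \<psi>_def edges_between_def)
  moreover have "disjoint_family_on ?F ?V"
    using \<phi> by (auto simp: disjoint_family_on_def edges_between_def bij_betw_def dest: inj_onD)
  ultimately have "bij_betw \<psi> (\<Union>p\<in>?V. ?E p) (\<Union>p\<in>?V. ?F p)"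
    by (intro bij_betw_UNION_disjoint)
  moreover have "(\<Union>p\<in>?V. ?E p) = gedges G"
    using wfG by (auto simp: wf_graph_def edges_between_def)
  moreover have "(\<Union>p\<in>?V. ?F p) = gedges H"
    using wfH \<phi> by (fastforce simp: wf_graph_def edges_between_def bij_betw_def)
  ultimately have "bij_betw \<psi> (gedges G) (gedges H)" by simp
  moreover have "gsrc H (\<psi> e) = \<phi> (gsrc G e) \<and> grng H (\<psi> e) = \<phi> (grng G e)" if "e \<in> gedges G" for e
    using \<beta>[of "(gsrc G e, grng G e)"] that wfG
    by (auto simp: \<psi>_def bij_betw_def edges_between_def wf_graph_def)
  ultimately show ?thesis using \<phi> unfolding graph_iso_def by blast
qed

definition edge_code :: "nat \<Rightarrow> nat \<Rightarrow> nat \<Rightarrow> nat" where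
  "edge_code x y k = prod_encode (x, prod_encode (y, k))"

definition code_src :: "nat \<Rightarrow> nat" where "code_src e = fst (prod_decode e)"
definition code_rng :: "nat \<Rightarrow> nat" where "code_rng e = fst (prod_decode (snd (prod_decode e)))"
definition code_idx :: "nat \<Rightarrow> nat" where "code_idx e = snd (prod_decode (snd (prod_decode e)))"

lemma edge_code_sel [simp]:
  "code_src (edge_code x y k) = x" "code_rng (edge_code x y k) = y" "code_idx (edge_code x y k) = k"
  by (simp_all add: edge_code_def code_src_def code_rng_def code_idx_def)

lemma edge_code_eq_iff [simp]: "edge_code x y k = edge_code x' y' k' \<longleftrightarrow> x = x' \<and> y = y' \<and> k = k'"
  by (auto simp: edge_code_def prod_encode_eq)

lemma inj_edge_code: "inj_on (edge_code x y) S"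
  by (simp add: inj_on_def)

text \<open>Vertex sets other than {0..<n} are needed because splittings introduce fresh vertices.\<close>
definition mat_graph :: "nat set \<Rightarrow> (nat \<Rightarrow> nat \<Rightarrow> enat) \<Rightarrow> graph" where
  "mat_graph V A = DGraph V {edge_code x y k | x y k. x \<in> V \<and> y \<in> V \<and> enat k < A x y} code_src code_rng"

lemma mat_graph_sel [simp]:
  "gverts (mat_graph V A) = V"
  "gedges (mat_graph V A) = {edge_code x y k | x y k. x \<in> V \<and> y \<in> V \<and> enat k < A x y}"
  "gsrc (mat_graph V A) = code_src" "grng (mat_graph V A) = code_rng"
  by (simp_all add: mat_graph_def)

lemma graph_of_matrix_eq_mat_graph: "graph_of_matrix n A = mat_graph {0..<n} A"
  by (simp add: graph_of_matrix_def mat_graph_def edge_code_def code_src_def code_rng_def fun_eq_iff)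

lemma wf_mat_graph: "finite V \<Longrightarrow> wf_graph (mat_graph V A)"
  by (auto simp: wf_graph_def)

lemma mat_graph_cong: "(\<And>x y. x \<in> V \<Longrightarrow> y \<in> V \<Longrightarrow> A x y = A' x y) \<Longrightarrow> mat_graph V A = mat_graph V A'"
  unfolding mat_graph_def by (rule arg_cong[where f = "\<lambda>E. DGraph V E code_src code_rng"]) auto

lemma ecard_filter_edges_between_mat_graph:
  "x \<in> V \<Longrightarrow> y \<in> V \<Longrightarrow> ecard {e \<in> edges_between (mat_graph V A) x y. Q e}
     = ecard {k. enat k < A x y \<and> Q (edge_code x y k)}"
proof -
  assume "x \<in> V" "y \<in> V"
  then have "{e \<in> edges_between (mat_graph V A) x y. Q e} = edge_code x y ` {k. enat k < A x y \<and> Q (edge_code x y k)}"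
    by (auto simp: edges_between_def)
  then show ?thesis by (simp add: ecard_image inj_edge_code)
qed

lemma edge_mult_mat_graph: "x \<in> V \<Longrightarrow> y \<in> V \<Longrightarrow> edge_mult (mat_graph V A) x y = A x y"
  using ecard_filter_edges_between_mat_graph[of x V y A "\<lambda>_. True"] by (simp add: edge_mult_def ecard_less)

lemma emitted_mat_graph:
  "v \<in> V \<Longrightarrow> emitted (mat_graph V A) v = {edge_code v y k | y k. y \<in> V \<and> enat k < A v y}"
  by (auto simp: emitted_def)

lemma received_mat_graph:
  "v \<in> V \<Longrightarrow> received (mat_graph V A) v = {edge_code x v k | x k. x \<in> V \<and> enat k < A x v}"
  by (auto simp: received_def)

lemma finite_emitted_mat_graph:
  assumes "finite V" "v \<in> V" "\<forall>y\<in>V. A v y \<noteq> \<infinity>"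
  shows "finite (emitted (mat_graph V A) v)"
proof (rule finite_subset)
  show "emitted (mat_graph V A) v \<subseteq> (\<Union>y\<in>V. edge_code v y ` {..<the_enat (A v y)})"
    using assms(2,3) by (force simp: emitted_mat_graph)
qed (use assms(1) in simp)

lemma edge_mult_O_move:
  assumes "(x,i) \<in> gverts (O_move G v n p)" "(y,j) \<in> gverts (O_move G v n p)"
  shows "edge_mult (O_move G v n p) (x,i) (y,j) = ecard {e \<in> edges_between G x y. x = v \<longrightarrow> p e = i}"
proof -
  have "edges_between (O_move G v n p) (x,i) (y,j) = (\<lambda>e. (e,j)) ` {e \<in> edges_between G x y. x = v \<longrightarrow> p e = i}"
    using assms by (auto simp: O_move_def edges_between_def split: if_splits)
  then show ?thesis by (simp add: edge_mult_def ecard_image inj_on_def)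
qed

lemma edge_mult_I_move:
  assumes "(x,i) \<in> gverts (I_move G v n p)" "(y,j) \<in> gverts (I_move G v n p)"
  shows "edge_mult (I_move G v n p) (x,i) (y,j) = ecard {e \<in> edges_between G x y. y = v \<longrightarrow> p e = j}"
proof -
  have "edges_between (I_move G v n p) (x,i) (y,j) = (\<lambda>e. (e,i)) ` {e \<in> edges_between G x y. y = v \<longrightarrow> p e = j}"
    using assms by (auto simp: I_move_def edges_between_def split: if_splits)
  then show ?thesis by (simp add: edge_mult_def ecard_image inj_on_def)
qed

lemma edge_mult_R_move:
  assumes "x \<in> gverts G - {u}" "y \<in> gverts G - {u}" "gsrc G f = u"
  shows "edge_mult (R_move G u f s) x y
    = edge_mult G x y + (if x = s \<and> y = grng G f then ecard (received G u) else 0)"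
proof -
  have "edges_between (R_move G u f s) x y
      = edges_between G x y <+> (if x = s \<and> y = grng G f then received G u else {})"
    using assms by (auto simp: R_move_def edges_between_def received_def)
  then show ?thesis by (simp add: edge_mult_def ecard_Plus)
qed

lemma wf_O_move: "wf_graph G \<Longrightarrow> \<forall>e\<in>emitted G v. p e < n \<Longrightarrow> wf_graph (O_move G v n p)"
  unfolding wf_graph_def emitted_def by (auto simp: O_move_def)

lemma wf_I_move: "wf_graph G \<Longrightarrow> \<forall>e\<in>received G v. p e < n \<Longrightarrow> wf_graph (I_move G v n p)"
  unfolding wf_graph_def received_def by (auto simp: I_move_def)

lemma wf_R_move: "wf_graph G \<Longrightarrow> R_ok G u f s \<Longrightarrow> s \<noteq> u \<Longrightarrow> wf_graph (R_move G u f s)"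
  unfolding wf_graph_def R_ok_def by (auto simp: R_move_def emitted_def received_def split: sum.splits)

text \<open>Splitting v into v and a fresh v': the copy v' takes P y of the edges from v to each y
  (resp. Q x of the edges from each x into v), and the column (resp. row) of v is duplicated.\<close>
definition out_split_mat :: "(nat \<Rightarrow> nat \<Rightarrow> enat) \<Rightarrow> nat \<Rightarrow> nat \<Rightarrow> (nat \<Rightarrow> enat) \<Rightarrow> nat \<Rightarrow> nat \<Rightarrow> enat" where
  "out_split_mat A v v' P x y =
     (let y\<^sub>0 = if y = v' then v else y in
      if x = v' then P y\<^sub>0 else if x = v then ediff (A v y\<^sub>0) (P y\<^sub>0) else A x y\<^sub>0)"

definition in_split_mat :: "(nat \<Rightarrow> nat \<Rightarrow> enat) \<Rightarrow> nat \<Rightarrow> nat \<Rightarrow> (nat \<Rightarrow> enat) \<Rightarrow> nat \<Rightarrow> nat \<Rightarrow> enat" where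
  "in_split_mat A v v' Q x y =
     (let x\<^sub>0 = if x = v' then v else x in
      if y = v' then Q x\<^sub>0 else if y = v then ediff (A x\<^sub>0 v) (Q x\<^sub>0) else A x\<^sub>0 y)"

text \<open>The edges labelled 1 are those moved to the copy of the split vertex: the first P y of
  the edges from v to y, resp. the first Q x of the edges from x to v.\<close>
definition out_label :: "(nat \<Rightarrow> enat) \<Rightarrow> nat \<Rightarrow> nat" where
  "out_label P e = (if enat (code_idx e) < P (code_rng e) then 1 else 0)"

definition in_label :: "(nat \<Rightarrow> enat) \<Rightarrow> nat \<Rightarrow> nat" where
  "in_label Q e = (if enat (code_idx e) < Q (code_src e) then 1 else 0)"

definition name_copy :: "nat \<Rightarrow> nat \<Rightarrow> nat \<times> nat \<Rightarrow> nat" where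
  "name_copy v v' = (\<lambda>(x, i). if x = v \<and> i = 1 then v' else x)"

lemma bij_betw_name_copy:
  assumes "v \<in> V" "v' \<notin> V"
  shows "bij_betw (name_copy v v') ({(w,0) | w. w \<in> V \<and> w \<noteq> v} \<union> {(v,i) | i. i < 2}) (insert v' V)"
  by (rule bij_betw_byWitness[where f' = "\<lambda>z. if z = v' then (v,1) else (z,0)"])
    (use assms in \<open>auto simp: name_copy_def less_2_cases_iff\<close>)

lemma O_ok_out_label:
  assumes V: "finite V" "v \<in> V"
    and P: "\<forall>y\<in>V. P y \<le> A v y" "\<forall>y\<in>V. P y \<noteq> \<infinity>"
    and ne: "\<exists>y\<in>V. 0 < P y" "\<exists>y\<in>V. P y < A v y"
  shows "O_ok (mat_graph V A) v 2 (out_label P)"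
proof -
  let ?E = "emitted (mat_graph V A) v"
  have em: "?E = {edge_code v y k | y k. y \<in> V \<and> enat k < A v y}"
    using V by (simp add: emitted_mat_graph)
  obtain y\<^sub>1 where "y\<^sub>1 \<in> V" "0 < P y\<^sub>1" using ne(1) by blast
  then have part1: "edge_code v y\<^sub>1 0 \<in> ?E" "out_label P (edge_code v y\<^sub>1 0) = 1"
    using P by (auto simp: em out_label_def zero_enat_def intro: less_le_trans)
  obtain y\<^sub>0 where y\<^sub>0: "y\<^sub>0 \<in> V" "P y\<^sub>0 < A v y\<^sub>0" using ne(2) by blast
  then obtain q where "P y\<^sub>0 = enat q" by (cases "P y\<^sub>0") auto
  then have part0: "edge_code v y\<^sub>0 q \<in> ?E" "out_label P (edge_code v y\<^sub>0 q) = 0"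
    using y\<^sub>0 by (auto simp: em out_label_def)
  have "{e \<in> ?E. out_label P e = 1} \<subseteq> (\<Union>y\<in>V. edge_code v y ` {..<the_enat (P y)})"
  proof
    fix e assume "e \<in> {e \<in> ?E. out_label P e = 1}"
    then obtain y k where "e = edge_code v y k" "y \<in> V" "enat k < P y"
      by (auto simp: em out_label_def split: if_splits)
    then show "e \<in> (\<Union>y\<in>V. edge_code v y ` {..<the_enat (P y)})" using P by fastforce
  qed
  then have "finite {e \<in> ?E. out_label P e = 1}" by (rule finite_subset) (use V in simp)
  then have "{i. i < 2 \<and> infinite {e \<in> ?E. out_label P e = i}} \<subseteq> {0}"
    using less_2_cases_iff by force
  then have "card {i. i < 2 \<and> infinite {e \<in> ?E. out_label P e = i}} \<le> card {0::nat}"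
    by (rule card_mono[rotated]) simp
  then show ?thesis
    unfolding O_ok_def
  proof (intro conjI)
    show "\<forall>i<2. \<exists>e\<in>?E. out_label P e = i"
      using part0 part1 by (auto simp: less_2_cases_iff)
  qed (use V part1 in \<open>auto simp: is_sink_def out_label_def\<close>)
qed

lemma edge_mult_O_move_out_label:
  assumes V: "v \<in> V" "v' \<notin> V" and P: "\<forall>y\<in>V. P y \<le> A v y"
    and a: "a \<in> gverts (O_move (mat_graph V A) v 2 (out_label P))"
    and b: "b \<in> gverts (O_move (mat_graph V A) v 2 (out_label P))"
  shows "edge_mult (O_move (mat_graph V A) v 2 (out_label P)) a b
    = edge_mult (mat_graph (insert v' V) (out_split_mat A v v' P)) (name_copy v v' a) (name_copy v v' b)"
proof -
  obtain x i y j where ab: "a = (x,i)" "b = (y,j)" by fastforce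
  have x: "x \<in> V" "i < 2" "x \<noteq> v \<longrightarrow> i = 0" and y: "y \<in> V" "j < 2" "y \<noteq> v \<longrightarrow> j = 0"
    using a b ab V by (auto simp: O_move_def)
  have "edge_mult (O_move (mat_graph V A) v 2 (out_label P)) a b
      = ecard {k. enat k < A x y \<and> (x = v \<longrightarrow> out_label P (edge_code x y k) = i)}"
    using a b x y by (simp add: ab edge_mult_O_move ecard_filter_edges_between_mat_graph)
  also have "\<dots> = ecard {k. enat k < A x y \<and> (x = v \<longrightarrow> (enat k < P y \<longleftrightarrow> i = 1))}"
    using x(2) by (intro arg_cong[where f = ecard]) (auto simp: out_label_def less_2_cases_iff)
  also have "\<dots> = (if x = v \<and> i = 1 then P y else if x = v then ediff (A v y) (P y) else A x y)"
  proof -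
    have "{k. enat k < A v y \<and> enat k < P y} = {k. enat k < P y}"
      using P y(1) by (auto intro: less_le_trans)
    then show ?thesis using x(2) by (auto simp: ecard_less ecard_less_not_less less_2_cases_iff)
  qed
  also have "\<dots> = edge_mult (mat_graph (insert v' V) (out_split_mat A v v' P)) (name_copy v v' a) (name_copy v v' b)"
    using x y V by (auto simp: edge_mult_mat_graph ab name_copy_def out_split_mat_def)
  finally show ?thesis .
qed

lemma move_step_out_split:
  assumes V: "finite V" "v \<in> V" "v' \<notin> V"
    and P: "\<forall>y\<in>V. P y \<le> A v y" "\<forall>y\<in>V. P y \<noteq> \<infinity>"
    and ne: "\<exists>y\<in>V. 0 < P y" "\<exists>y\<in>V. P y < A v y"
  shows "move_step (mat_graph V A) (mat_graph (insert v' V) (out_split_mat A v v' P))"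
proof -
  let ?O = "O_move (mat_graph V A) v 2 (out_label P)"
  have wf: "wf_graph ?O"
    using V by (intro wf_O_move wf_mat_graph) (simp_all add: out_label_def)
  have "graph_iso ?O (mat_graph (insert v' V) (out_split_mat A v v' P))"
  proof (rule graph_iso_if_edge_mult_eq[OF wf wf_mat_graph])
    show "bij_betw (name_copy v v') (gverts ?O) (gverts (mat_graph (insert v' V) (out_split_mat A v v' P)))"
      using bij_betw_name_copy[OF V(2,3)] by (simp add: O_move_def)
  qed (use V P in \<open>simp_all add: edge_mult_O_move_out_label\<close>)
  then show ?thesis
    using O_ok_out_label[of V v P A] assms wf_mat_graph[OF V(1)] wf_mat_graph[of "insert v' V"] V(1)
    unfolding move_step_def by auto
qed

lemma I_ok_in_label:
  assumes V: "finite V" "v \<in> V"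
    and Q: "\<forall>x\<in>V. Q x \<le> A x v" and ne: "\<exists>x\<in>V. 0 < Q x" "\<exists>x\<in>V. Q x < A x v"
    and row: "\<forall>y\<in>V. A v y \<noteq> \<infinity>" "\<exists>y\<in>V. A v y \<noteq> 0"
  shows "I_ok (mat_graph V A) v 2 (in_label Q)"
proof -
  let ?G = "mat_graph V A"
  have rc: "received ?G v = {edge_code x v k | x k. x \<in> V \<and> enat k < A x v}"
    using V by (simp add: received_mat_graph)
  obtain x\<^sub>1 where "x\<^sub>1 \<in> V" "0 < Q x\<^sub>1" using ne(1) by blast
  then have part1: "edge_code x\<^sub>1 v 0 \<in> received ?G v" "in_label Q (edge_code x\<^sub>1 v 0) = 1"
    using Q by (auto simp: rc in_label_def zero_enat_def intro: less_le_trans)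
  obtain x\<^sub>0 where x\<^sub>0: "x\<^sub>0 \<in> V" "Q x\<^sub>0 < A x\<^sub>0 v" using ne(2) by blast
  then obtain q where "Q x\<^sub>0 = enat q" by (cases "Q x\<^sub>0") auto
  then have part0: "edge_code x\<^sub>0 v q \<in> received ?G v" "in_label Q (edge_code x\<^sub>0 v q) = 0"
    using x\<^sub>0 by (auto simp: rc in_label_def)
  obtain y where "y \<in> V" "A v y \<noteq> 0" using row by blast
  then have "edge_code v y 0 \<in> emitted ?G v"
    using V by (auto simp: emitted_mat_graph zero_enat_def[symmetric] gr_zeroI)
  then have "is_regular ?G v"
    using finite_emitted_mat_graph[of V v A] V row(1)
    by (auto simp: is_regular_def is_sink_def is_inf_emitter_def)
  then show ?thesis
    unfolding I_ok_def
  proof (intro conjI)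
    show "\<forall>i<2. \<exists>e\<in>received ?G v. in_label Q e = i"
      using part0 part1 by (auto simp: less_2_cases_iff)
  qed (use V part1 in \<open>auto simp: is_source_def in_label_def\<close>)
qed

lemma edge_mult_I_move_in_label:
  assumes V: "v \<in> V" "v' \<notin> V" and Q: "\<forall>x\<in>V. Q x \<le> A x v"
    and a: "a \<in> gverts (I_move (mat_graph V A) v 2 (in_label Q))"
    and b: "b \<in> gverts (I_move (mat_graph V A) v 2 (in_label Q))"
  shows "edge_mult (I_move (mat_graph V A) v 2 (in_label Q)) a b
    = edge_mult (mat_graph (insert v' V) (in_split_mat A v v' Q)) (name_copy v v' a) (name_copy v v' b)"
proof -
  obtain x i y j where ab: "a = (x,i)" "b = (y,j)" by fastforce
  have x: "x \<in> V" "i < 2" "x \<noteq> v \<longrightarrow> i = 0" and y: "y \<in> V" "j < 2" "y \<noteq> v \<longrightarrow> j = 0"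
    using a b ab V by (auto simp: I_move_def)
  have "edge_mult (I_move (mat_graph V A) v 2 (in_label Q)) a b
      = ecard {k. enat k < A x y \<and> (y = v \<longrightarrow> in_label Q (edge_code x y k) = j)}"
    using a b x y by (simp add: ab edge_mult_I_move ecard_filter_edges_between_mat_graph)
  also have "\<dots> = ecard {k. enat k < A x y \<and> (y = v \<longrightarrow> (enat k < Q x \<longleftrightarrow> j = 1))}"
    using y(2) by (intro arg_cong[where f = ecard]) (auto simp: in_label_def less_2_cases_iff)
  also have "\<dots> = (if y = v \<and> j = 1 then Q x else if y = v then ediff (A x v) (Q x) else A x y)"
  proof -
    have "{k. enat k < A x v \<and> enat k < Q x} = {k. enat k < Q x}"
      using Q x(1) by (auto intro: less_le_trans)
    then show ?thesis using y(2) by (auto simp: ecard_less ecard_less_not_less less_2_cases_iff)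
  qed
  also have "\<dots> = edge_mult (mat_graph (insert v' V) (in_split_mat A v v' Q)) (name_copy v v' a) (name_copy v v' b)"
    using x y V by (auto simp: edge_mult_mat_graph ab name_copy_def in_split_mat_def)
  finally show ?thesis .
qed

lemma move_step_in_split:
  assumes V: "finite V" "v \<in> V" "v' \<notin> V"
    and Q: "\<forall>x\<in>V. Q x \<le> A x v" and ne: "\<exists>x\<in>V. 0 < Q x" "\<exists>x\<in>V. Q x < A x v"
    and row: "\<forall>y\<in>V. A v y \<noteq> \<infinity>" "\<exists>y\<in>V. A v y \<noteq> 0"
  shows "move_step (mat_graph V A) (mat_graph (insert v' V) (in_split_mat A v v' Q))"
proof -
  let ?I = "I_move (mat_graph V A) v 2 (in_label Q)"
  have wf: "wf_graph ?I"
    using V by (intro wf_I_move wf_mat_graph) (simp_all add: in_label_def)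
  have "graph_iso ?I (mat_graph (insert v' V) (in_split_mat A v v' Q))"
  proof (rule graph_iso_if_edge_mult_eq[OF wf wf_mat_graph])
    show "bij_betw (name_copy v v') (gverts ?I) (gverts (mat_graph (insert v' V) (in_split_mat A v v' Q)))"
      using bij_betw_name_copy[OF V(2,3)] by (simp add: I_move_def)
  qed (use V Q in \<open>simp_all add: edge_mult_I_move_in_label\<close>)
  then show ?thesis
    using I_ok_in_label[of V v Q A] assms wf_mat_graph[OF V(1)] wf_mat_graph[of "insert v' V"] V(1)
    unfolding move_step_def by auto
qed

lemma move_step_reduction:
  assumes V: "finite V" "u \<in> V" "w \<in> V" "s \<in> V" "w \<noteq> u" "s \<noteq> u"
    and row: "\<forall>y\<in>V. A u y = (if y = w then 1 else 0)" and col: "\<forall>x\<in>V. x \<noteq> s \<longrightarrow> A x u = 0"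
  shows "move_step (mat_graph V A) (mat_graph (V - {u}) (\<lambda>x y. A x y + (if x = s \<and> y = w then A s u else 0)))"
proof -
  let ?G = "mat_graph V A" and ?H = "mat_graph (V - {u}) (\<lambda>x y. A x y + (if x = s \<and> y = w then A s u else 0))"
  define f where "f = edge_code u w 0"
  have "emitted ?G u = {f}"
    using V row by (auto simp: emitted_mat_graph f_def one_enat_def split: if_splits)
  moreover have rc: "received ?G u = edges_between ?G s u"
    using V col by (auto simp: received_def edges_between_def zero_enat_def[symmetric])
  ultimately have ok: "R_ok ?G u f s"
    using V by (auto simp: R_ok_def is_regular_def is_sink_def is_inf_emitter_def f_def edges_between_def)
  have wf: "wf_graph (R_move ?G u f s)"
    using V ok by (intro wf_R_move wf_mat_graph) simp_all
  have "graph_iso (R_move ?G u f s) ?H"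
  proof (rule graph_iso_if_edge_mult_eq[OF wf wf_mat_graph])
    show "finite (V - {u})" using V(1) by simp
    show "bij_betw id (gverts (R_move ?G u f s)) (gverts ?H)" by (simp add: R_move_def)
  next
    fix x y assume "x \<in> gverts (R_move ?G u f s)" "y \<in> gverts (R_move ?G u f s)"
    then have xy: "x \<in> V - {u}" "y \<in> V - {u}" by (simp_all add: R_move_def)
    have "ecard (received ?G u) = A s u"
      using V by (simp add: rc edge_mult_mat_graph flip: edge_mult_def)
    then show "edge_mult (R_move ?G u f s) x y = edge_mult ?H (id x) (id y)"
      using xy by (simp add: edge_mult_R_move edge_mult_mat_graph f_def)
  qed
  then show ?thesis
    using ok wf_mat_graph[OF V(1)] wf_mat_graph[of "V - {u}"] V(1) unfolding move_step_def by blast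
qed

section \<open>Deleting a vertex with a unit row or column\<close>

lemma move_equiv_if_move_step: "move_step G H \<Longrightarrow> G \<sim>\<^sub>M H"
  by (simp add: move_equiv_def r_into_equivclp)

lemma move_equiv_sym: "G \<sim>\<^sub>M H \<Longrightarrow> H \<sim>\<^sub>M G"
  unfolding move_equiv_def by (rule equivclp_sym)

lemma move_equiv_trans [trans]: "G \<sim>\<^sub>M H \<Longrightarrow> H \<sim>\<^sub>M K \<Longrightarrow> G \<sim>\<^sub>M K"
  unfolding move_equiv_def by (rule equivclp_trans)

lemma obtain_fresh_nat:
  fixes W :: "nat set"
  assumes "finite W"
  obtains N' where "N' \<notin> W"
  using assms ex_new_if_finite infinite_UNIV_nat by blast

text \<open>An in-splitting at N moves the edges from s to a copy N' of N.  Then N' inherits the unit row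
  of N and receives edges only from s, so an (R) move deletes it.\<close>
lemma move_equiv_shift_column_entry:
  assumes W: "finite W" "N \<in> W" "d \<in> W" "d \<noteq> N"
    and row: "\<forall>y\<in>W. M N y = (if y = d then 1 else 0)"
    and s: "s \<in> W" "s' \<in> W" "s \<noteq> s'" "M s N \<noteq> 0" "M s' N \<noteq> 0"
  shows "mat_graph W M \<sim>\<^sub>M
    mat_graph W (\<lambda>x y. (if x = s \<and> y = N then 0 else M x y) + (if x = s \<and> y = d then M s N else 0))"
proof -
  have "M N N = 0" using row W by simp
  then have sN: "s \<noteq> N" using s by auto
  obtain N' where N': "N' \<notin> W" using W(1) by (rule obtain_fresh_nat)
  define Q where "Q x = (if x = s then M s N else 0)" for x
  define M' where "M' = in_split_mat M N N' Q"
  have "mat_graph W M \<sim>\<^sub>M mat_graph (insert N' W) M'"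
    unfolding M'_def
  proof (intro move_equiv_if_move_step move_step_in_split)
    show "\<forall>x\<in>W. Q x \<le> M x N" by (simp add: Q_def)
    show "\<exists>x\<in>W. 0 < Q x" using s by (auto simp: Q_def)
    show "\<exists>x\<in>W. Q x < M x N" using s by (auto simp: Q_def intro!: bexI[of _ s'])
    show "\<forall>y\<in>W. M N y \<noteq> \<infinity>" using row by (simp del: not_infinity_eq)
    show "\<exists>y\<in>W. M N y \<noteq> 0" using row W by auto
  qed (use W N' in auto)
  also have "\<dots> \<sim>\<^sub>M mat_graph (insert N' W - {N'}) (\<lambda>x y. M' x y + (if x = s \<and> y = d then M' s N' else 0))"
  proof (intro move_equiv_if_move_step move_step_reduction)
    show "\<forall>y\<in>insert N' W. M' N' y = (if y = d then 1 else 0)"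
      using row W N' \<open>M N N = 0\<close> sN by (auto simp: M'_def in_split_mat_def Q_def)
    show "\<forall>x\<in>insert N' W. x \<noteq> s \<longrightarrow> M' x N' = 0"
      using sN by (auto simp: M'_def in_split_mat_def Q_def)
  qed (use W N' s in auto)
  also have "mat_graph (insert N' W - {N'}) (\<lambda>x y. M' x y + (if x = s \<and> y = d then M' s N' else 0))
    = mat_graph W (\<lambda>x y. (if x = s \<and> y = N then 0 else M x y) + (if x = s \<and> y = d then M s N else 0))"
    unfolding Diff_insert_absorb[OF N'] using N' by (intro mat_graph_cong) (auto simp: M'_def in_split_mat_def Q_def)
  finally show ?thesis .
qed

lemma move_equiv_remove_unit_row_vertex:
  assumes W: "finite W" "N \<in> W" "d \<in> W" "d \<noteq> N"
    and row: "\<forall>y\<in>W. M N y = (if y = d then 1 else 0)"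
  shows "mat_graph W M \<sim>\<^sub>M mat_graph (W - {N}) (\<lambda>x y. M x y + (if y = d then M x N else 0))"
  using row
proof (induction "card {x \<in> W. M x N \<noteq> 0}" arbitrary: M rule: less_induct)
  case less
  have MNN: "M N N = 0" using less.prems W by simp
  show ?case
  proof (cases "\<exists>s\<in>W. s \<noteq> N \<and> (\<forall>x\<in>W. x \<noteq> s \<longrightarrow> M x N = 0)")
    case True
    then obtain s where s: "s \<in> W" "s \<noteq> N" "\<forall>x\<in>W. x \<noteq> s \<longrightarrow> M x N = 0" by blast
    have "mat_graph W M \<sim>\<^sub>M mat_graph (W - {N}) (\<lambda>x y. M x y + (if x = s \<and> y = d then M s N else 0))"
      using W s less.prems by (intro move_equiv_if_move_step move_step_reduction) auto
    also have "\<dots> = mat_graph (W - {N}) (\<lambda>x y. M x y + (if y = d then M x N else 0))"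
      using s by (intro mat_graph_cong) auto
    finally show ?thesis .
  next
    case False
    then obtain s where s: "s \<in> W" "s \<noteq> d" "M s N \<noteq> 0" using W by blast
    moreover have "s \<noteq> N" using s MNN by auto
    ultimately obtain s' where s': "s' \<in> W" "s' \<noteq> s" "M s' N \<noteq> 0" using False by blast
    define M' where "M' x y = (if x = s \<and> y = N then 0 else M x y) + (if x = s \<and> y = d then M s N else 0)" for x y
    have "{x \<in> W. M' x N \<noteq> 0} = {x \<in> W. M x N \<noteq> 0} - {s}"
      using W by (auto simp: M'_def)
    then have fewer: "card {x \<in> W. M' x N \<noteq> 0} < card {x \<in> W. M x N \<noteq> 0}"
      using W(1) s by (simp only:) (intro card_Diff1_less; simp)
    have row': "\<forall>y\<in>W. M' N y = (if y = d then 1 else 0)"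
      using less.prems MNN s by (auto simp: M'_def)
    have "mat_graph W M \<sim>\<^sub>M mat_graph W M'"
      unfolding M'_def
      by (rule move_equiv_shift_column_entry[OF W less.prems s(1) s'(1) not_sym[OF s'(2)] s(3) s'(3)])
    also have "\<dots> \<sim>\<^sub>M mat_graph (W - {N}) (\<lambda>x y. M' x y + (if y = d then M' x N else 0))"
      using fewer row' by (rule less.hyps)
    also have "\<dots> = mat_graph (W - {N}) (\<lambda>x y. M x y + (if y = d then M x N else 0))"
      using W by (intro mat_graph_cong) (auto simp: M'_def add.commute)
    finally show ?thesis .
  qed
qed

text \<open>An out-splitting at N moves one edge N \<rightarrow> t to a copy N' of N.  Then N' receives only the
  edge from b and emits only the edge to t, so an (R) move deletes it.\<close>
lemma move_equiv_shift_row_entry: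
  assumes W: "finite W" "N \<in> W" "b \<in> W" "b \<noteq> N"
    and col: "\<forall>x\<in>W. M x N = (if x = b then 1 else 0)"
    and t: "t \<in> W" "M N t \<noteq> 0" and ne: "\<exists>y\<in>W. (if y = t then 1 else 0) < M N y"
  shows "mat_graph W M \<sim>\<^sub>M
    mat_graph W (\<lambda>x y. M x y - (if x = N \<and> y = t then 1 else 0) + (if x = b \<and> y = t then 1 else 0))"
proof -
  have "M N N = 0" using col W by simp
  then have tN: "t \<noteq> N" using t by auto
  obtain N' where N': "N' \<notin> W" using W(1) by (rule obtain_fresh_nat)
  define P where "P y = (if y = t then 1 else 0::enat)" for y
  define M' where "M' = out_split_mat M N N' P"
  have "mat_graph W M \<sim>\<^sub>M mat_graph (insert N' W) M'"
    unfolding M'_def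
  proof (intro move_equiv_if_move_step move_step_out_split)
    show "\<forall>y\<in>W. P y \<le> M N y" using t by (auto simp: P_def ileI1 one_eSuc)
    show "\<forall>y\<in>W. P y \<noteq> \<infinity>" by (simp add: P_def del: not_infinity_eq)
    show "\<exists>y\<in>W. 0 < P y" using t by (auto simp: P_def)
    show "\<exists>y\<in>W. P y < M N y" using ne by (simp add: P_def)
  qed (use W N' in auto)
  also have "\<dots> \<sim>\<^sub>M mat_graph (insert N' W - {N'}) (\<lambda>x y. M' x y + (if x = b \<and> y = t then M' b N' else 0))"
  proof (intro move_equiv_if_move_step move_step_reduction)
    show "\<forall>y\<in>insert N' W. M' N' y = (if y = t then 1 else 0)"
      using N' t tN by (auto simp: M'_def out_split_mat_def P_def)
    show "\<forall>x\<in>insert N' W. x \<noteq> b \<longrightarrow> M' x N' = 0"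
      using col N' W \<open>M N N = 0\<close> tN by (auto simp: M'_def out_split_mat_def P_def)
  qed (use W N' t in auto)
  also have "mat_graph (insert N' W - {N'}) (\<lambda>x y. M' x y + (if x = b \<and> y = t then M' b N' else 0))
    = mat_graph W (\<lambda>x y. M x y - (if x = N \<and> y = t then 1 else 0) + (if x = b \<and> y = t then 1 else 0))"
    unfolding Diff_insert_absorb[OF N'] using N' W col tN
    by (intro mat_graph_cong) (auto simp: M'_def out_split_mat_def P_def ediff_def)
  finally show ?thesis .
qed

lemma sum_the_enat_minus_indicator_less:
  fixes f :: "'a \<Rightarrow> enat"
  assumes "finite W" "t \<in> W" "f t \<noteq> 0" "\<forall>y\<in>W. f y \<noteq> \<infinity>"
  shows "(\<Sum>y\<in>W. the_enat (f y - (if y = t then 1 else 0))) < (\<Sum>y\<in>W. the_enat (f y))"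
proof (rule sum_strict_mono_ex1[OF assms(1)])
  show "\<forall>y\<in>W. the_enat (f y - (if y = t then 1 else 0)) \<le> the_enat (f y)"
    using assms(4) by (auto simp: one_enat_def zero_enat_def)
  show "\<exists>y\<in>W. the_enat (f y - (if y = t then 1 else 0)) < the_enat (f y)"
    using assms(2-4) by (cases "f t") (auto simp: one_enat_def zero_enat_def intro!: bexI[of _ t])
qed

lemma move_equiv_remove_unit_col_vertex:
  assumes W: "finite W" "N \<in> W" "b \<in> W" "b \<noteq> N"
    and col: "\<forall>x\<in>W. M x N = (if x = b then 1 else 0)"
    and row: "\<forall>y\<in>W. M N y \<noteq> \<infinity>" "\<exists>y\<in>W. M N y \<noteq> 0"
  shows "mat_graph W M \<sim>\<^sub>M mat_graph (W - {N}) (\<lambda>x y. M x y + (if x = b then M N y else 0))"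
  using col row
proof (induction "\<Sum>y\<in>W. the_enat (M N y)" arbitrary: M rule: less_induct)
  case less
  have MNN: "M N N = 0" using less.prems(1) W by simp
  obtain t where t: "t \<in> W" "M N t \<noteq> 0" using less.prems(3) by blast
  then have tN: "t \<noteq> N" using MNN by auto
  show ?case
  proof (cases "\<exists>y\<in>W. (if y = t then 1 else 0) < M N y")
    case False
    then have le: "\<forall>y\<in>W. M N y \<le> (if y = t then 1 else 0)" by (auto simp: not_less)
    then have "M N t \<le> 1" using t(1) by fastforce
    then have "M N t = 1" using t(2) by (cases "M N t") (auto simp: one_enat_def zero_enat_def)
    then have unit: "\<forall>y\<in>W. M N y = (if y = t then 1 else 0)"
      using le by auto
    have "mat_graph W M \<sim>\<^sub>M mat_graph (W - {N}) (\<lambda>x y. M x y + (if x = b \<and> y = t then M b N else 0))"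
      using W t tN unit less.prems(1) by (intro move_equiv_if_move_step move_step_reduction) auto
    also have "\<dots> = mat_graph (W - {N}) (\<lambda>x y. M x y + (if x = b then M N y else 0))"
      using W unit less.prems(1) by (intro mat_graph_cong) auto
    finally show ?thesis .
  next
    case True
    then obtain y where y: "y \<in> W" "(if y = t then 1 else 0) < M N y" by blast
    define M' where "M' x y = M x y - (if x = N \<and> y = t then 1 else 0) + (if x = b \<and> y = t then 1 else 0)" for x y
    have row': "M' N y = M N y - (if y = t then 1 else 0)" for y
      using W by (simp add: M'_def)
    have fewer: "(\<Sum>y\<in>W. the_enat (M' N y)) < (\<Sum>y\<in>W. the_enat (M N y))"
      unfolding row' using W(1) t less.prems(2) by (rule sum_the_enat_minus_indicator_less)
    have col': "\<forall>x\<in>W. M' x N = (if x = b then 1 else 0)"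
      using less.prems(1) tN by (simp add: M'_def)
    have fin': "\<forall>y\<in>W. M' N y \<noteq> \<infinity>"
      using less.prems(2) by (auto simp: row' one_enat_def)
    have "M' N y \<noteq> 0"
      using y(2) by (cases "M N y") (auto simp: row' one_enat_def zero_enat_def)
    then have nz': "\<exists>y\<in>W. M' N y \<noteq> 0" using y(1) by blast
    have "mat_graph W M \<sim>\<^sub>M mat_graph W M'"
      unfolding M'_def by (rule move_equiv_shift_row_entry[OF W less.prems(1) t True])
    also have "\<dots> \<sim>\<^sub>M mat_graph (W - {N}) (\<lambda>x y. M' x y + (if x = b then M' N y else 0))"
      using fewer col' fin' nz' by (rule less.hyps)
    also have "\<dots> = mat_graph (W - {N}) (\<lambda>x y. M x y + (if x = b then M N y else 0))"
    proof (rule mat_graph_cong)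
      have "1 + (M N t - 1) = M N t"
        using t less.prems(2) by (cases "M N t") (auto simp: one_enat_def zero_enat_def)
      then show "M' x y + (if x = b then M' N y else 0) = M x y + (if x = b then M N y else 0)"
        if "x \<in> W - {N}" "y \<in> W - {N}" for x y
        using that by (simp add: M'_def row' ac_simps)
    qed
    finally show ?thesis .
  qed
qed

section \<open>Adding rows and columns\<close>

lemma move_equiv_add_column:
  assumes V: "finite V" "c \<in> V" "d \<in> V" "c \<noteq> d"
    and cd: "A c d \<noteq> 0" and ne: "\<exists>y\<in>V. (if y = d then 1 else 0) < A c y"
  shows "mat_graph V A \<sim>\<^sub>M
    mat_graph V (\<lambda>x y. (if x = c \<and> y = d then A c d - 1 else A x y) + (if y = d then A x c else 0))"
proof -
  obtain c' where c': "c' \<notin> V" using V(1) by (rule obtain_fresh_nat)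
  define P where "P y = (if y = d then 1 else 0::enat)" for y
  define A' where "A' = out_split_mat A c c' P"
  have "mat_graph V A \<sim>\<^sub>M mat_graph (insert c' V) A'"
    unfolding A'_def
  proof (intro move_equiv_if_move_step move_step_out_split)
    show "\<forall>y\<in>V. P y \<le> A c y" using cd by (auto simp: P_def ileI1 one_eSuc)
    show "\<forall>y\<in>V. P y \<noteq> \<infinity>" by (simp add: P_def del: not_infinity_eq)
    show "\<exists>y\<in>V. 0 < P y" using V by (auto simp: P_def)
    show "\<exists>y\<in>V. P y < A c y" using ne by (simp add: P_def)
  qed (use V c' in auto)
  also have "\<dots> \<sim>\<^sub>M mat_graph (insert c' V - {c'}) (\<lambda>x y. A' x y + (if y = d then A' x c' else 0))"
    using V c' by (intro move_equiv_remove_unit_row_vertex) (auto simp: A'_def out_split_mat_def P_def)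
  also have "\<dots> = mat_graph V (\<lambda>x y. (if x = c \<and> y = d then A c d - 1 else A x y) + (if y = d then A x c else 0))"
    unfolding Diff_insert_absorb[OF c'] using V c'
    by (intro mat_graph_cong) (auto simp: A'_def out_split_mat_def P_def ediff_def)
  finally show ?thesis .
qed

lemma move_equiv_add_row:
  assumes V: "finite V" "a \<in> V" "b \<in> V" "a \<noteq> b"
    and ba: "A b a \<noteq> 0" and aa: "A a a \<noteq> 0" and fin: "\<forall>y\<in>V. A a y \<noteq> \<infinity>"
  shows "mat_graph V A \<sim>\<^sub>M
    mat_graph V (\<lambda>x y. (if x = b \<and> y = a then A b a - 1 else A x y) + (if x = b then A a y else 0))"
proof -
  obtain a' where a': "a' \<notin> V" using V(1) by (rule obtain_fresh_nat)
  define Q where "Q x = (if x = b then 1 else 0::enat)" for x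
  define A' where "A' = in_split_mat A a a' Q"
  have "mat_graph V A \<sim>\<^sub>M mat_graph (insert a' V) A'"
    unfolding A'_def
  proof (intro move_equiv_if_move_step move_step_in_split)
    show "\<forall>x\<in>V. Q x \<le> A x a" using ba by (auto simp: Q_def ileI1 one_eSuc)
    show "\<exists>x\<in>V. 0 < Q x" using V by (auto simp: Q_def)
    show "\<exists>x\<in>V. Q x < A x a" using V aa by (auto simp: Q_def intro!: bexI[of _ a])
    show "\<exists>y\<in>V. A a y \<noteq> 0" using V aa by blast
  qed (use V a' fin in auto)
  also have "\<dots> \<sim>\<^sub>M mat_graph (insert a' V - {a'}) (\<lambda>x y. A' x y + (if x = b then A' a' y else 0))"
  proof (intro move_equiv_remove_unit_col_vertex)
    show "\<forall>x\<in>insert a' V. A' x a' = (if x = b then 1 else 0)"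
      using V a' by (auto simp: A'_def in_split_mat_def Q_def)
    show "\<forall>y\<in>insert a' V. A' a' y \<noteq> \<infinity>"
      using V a' fin by (auto simp: A'_def in_split_mat_def Q_def ediff_def simp del: not_infinity_eq)
    show "\<exists>y\<in>insert a' V. A' a' y \<noteq> 0"
      using V a' aa by (auto simp: A'_def in_split_mat_def Q_def intro!: bexI[of _ a])
  qed (use V a' in auto)
  also have "\<dots> = mat_graph V (\<lambda>x y. (if x = b \<and> y = a then A b a - 1 else A x y) + (if x = b then A a y else 0))"
    unfolding Diff_insert_absorb[OF a'] using V a'
    by (intro mat_graph_cong) (auto simp: A'_def in_split_mat_def Q_def ediff_def)
  finally show ?thesis .
qed

definition offdiag_edges :: "nat \<Rightarrow> (nat \<Rightarrow> nat \<Rightarrow> enat) \<Rightarrow> (nat \<times> nat) set" where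
  "offdiag_edges n A = {(x, y). x < n \<and> y < n \<and> x \<noteq> y \<and> A x y \<noteq> 0}"

lemma rtrancl_offdiag_edges_if_irreducible:
  assumes "irreducible_mat n A" "c < n" "d < n"
  shows "(c, d) \<in> (offdiag_edges n A)\<^sup>*"
proof -
  let ?G = "mat_graph {0..<n} A"
  let ?E = "{(gsrc ?G e, grng ?G e) | e. e \<in> gedges ?G}"
  have "?E \<subseteq> (offdiag_edges n A)\<^sup>="
  proof
    fix p assume "p \<in> ?E"
    then obtain x y k where p: "p = (x, y)" "x < n" "y < n" "enat k < A x y" by auto
    then have "A x y \<noteq> 0" by auto
    then show "p \<in> (offdiag_edges n A)\<^sup>=" using p by (auto simp: offdiag_edges_def)
  qed
  then have "?E\<^sup>* \<subseteq> (offdiag_edges n A)\<^sup>*"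
    using rtrancl_mono rtrancl_reflcl by blast
  moreover have "(c, d) \<in> ?E\<^sup>*"
    using assms unfolding irreducible_mat_def strongly_connected_def graph_of_matrix_eq_mat_graph by auto
  ultimately show ?thesis by blast
qed

lemma JplusB_add_column_step:
  assumes "(c, d) \<in> offdiag_edges n (JplusB n m B)"
  shows "mat_move_equiv n (JplusB n m B) (JplusB n m (add_column B c d))"
proof -
  have cd: "c < n" "d < n" "c \<noteq> d" "m \<le> c \<or> 0 < B c d"
    using assms by (auto simp: offdiag_edges_def JplusB_def J_mat_def zero_enat_def split: if_splits)
  let ?A = "JplusB n m B"
  have "mat_graph {0..<n} ?A \<sim>\<^sub>M mat_graph {0..<n}
      (\<lambda>x y. (if x = c \<and> y = d then ?A c d - 1 else ?A x y) + (if y = d then ?A x c else 0))"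
    using cd by (intro move_equiv_add_column bexI[of _ c])
      (auto simp: JplusB_def J_mat_def zero_enat_def one_enat_def)
  also have "\<dots> = mat_graph {0..<n} (JplusB n m (add_column B c d))"
    using cd by (intro mat_graph_cong)
      (auto simp: JplusB_def J_mat_def add_column_def zero_enat_def one_enat_def)
  finally show ?thesis
    unfolding mat_move_equiv_def graph_of_matrix_eq_mat_graph .
qed

lemma JplusB_add_row_step:
  assumes "(b, a) \<in> offdiag_edges m (JplusB n m B)" "m \<le> n"
  shows "mat_move_equiv n (JplusB n m B) (JplusB n m (add_row B a b))"
proof -
  have ab: "a < m" "b < m" "a \<noteq> b" "0 < B b a"
    using assms by (auto simp: offdiag_edges_def JplusB_def J_mat_def zero_enat_def)
  let ?A = "JplusB n m B"
  have "mat_graph {0..<n} ?A \<sim>\<^sub>M mat_graph {0..<n}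
      (\<lambda>x y. (if x = b \<and> y = a then ?A b a - 1 else ?A x y) + (if x = b then ?A a y else 0))"
    using ab assms(2) by (intro move_equiv_add_row)
      (auto simp: JplusB_def J_mat_def zero_enat_def one_enat_def)
  also have "\<dots> = mat_graph {0..<n} (JplusB n m (add_row B a b))"
    using ab by (intro mat_graph_cong)
      (auto simp: JplusB_def J_mat_def add_row_def zero_enat_def one_enat_def)
  finally show ?thesis
    unfolding mat_move_equiv_def graph_of_matrix_eq_mat_graph .
qed

lemma relpow_mono: "(R :: ('a \<times> 'a) set) \<subseteq> S \<Longrightarrow> (x, y) \<in> R ^^ k \<Longrightarrow> (x, y) \<in> S ^^ k"
  using relpowp_mono[of "\<lambda>a b. (a, b) \<in> R" "\<lambda>a b. (a, b) \<in> S" k x y] by (auto simp: relpowp_relpow_eq)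

lemma equiv_add_along_path:
  fixes R :: "'b \<Rightarrow> ('a \<times> 'a) set" and add :: "'b \<Rightarrow> 'a \<Rightarrow> 'a \<Rightarrow> 'b" and E :: "'b \<Rightarrow> 'b \<Rightarrow> bool"
  assumes sym: "\<And>B B'. E B B' \<Longrightarrow> E B' B"
    and trans: "\<And>B B' B''. E B B' \<Longrightarrow> E B' B'' \<Longrightarrow> E B B''"
    and irrefl: "\<And>B x. (x, x) \<notin> R B"
    and step: "\<And>B x d. (x, d) \<in> R B \<Longrightarrow> E B (add B x d)"
    and mono: "\<And>B x d. R B \<subseteq> R (add B x d)"
    and redirect: "\<And>B x y d. (x, d) \<in> R B \<Longrightarrow> (y, x) \<in> R B \<Longrightarrow> y \<noteq> d \<Longrightarrow> (y, d) \<in> R (add B x d)"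
    and comm: "\<And>B c x d. c \<noteq> d \<Longrightarrow> x \<noteq> d \<Longrightarrow> add (add B x d) c d = add (add B c d) x d"
    and path: "(c, d) \<in> (R B)\<^sup>*" and cd: "c \<noteq> d"
  shows "E B (add B c d)"
proof -
  obtain k where "(c, d) \<in> R B ^^ k" using path rtrancl_power by blast
  then show ?thesis
  proof (induction k arbitrary: B rule: less_induct)
    case (less k)
    obtain k' x where k: "k = Suc k'" and cx: "(c, x) \<in> R B ^^ k'" and xd: "(x, d) \<in> R B"
      using less.prems cd by (cases k) (auto elim: relpow_Suc_E)
    show ?case
    proof (cases "x = c")
      case True
      with xd show ?thesis by (simp add: step)
    next
      case False
      then obtain k'' y where k': "k' = Suc k''" and cy: "(c, y) \<in> R B ^^ k''" and yx: "(y, x) \<in> R B"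
        using cx by (cases k') (auto elim: relpow_Suc_E)
      show ?thesis
      proof (cases "y = d")
        case True
        have "k'' < k" by (simp add: k k')
        with cy True show ?thesis by (intro less.IH) simp_all
      next
        case False
        txt \<open>B \<sim> B + (x to d) \<sim> B + (x to d) + (c to d) = B + (c to d) + (x to d) \<sim> B + (c to d),
          where the middle step is the induction hypothesis for the path from c via y to d.\<close>
        let ?B' = "add B x d"
        have "(c, d) \<in> R ?B' ^^ Suc k''"
          using relpow_mono[OF mono cy] redirect[OF xd yx False] by (rule relpow_Suc_I)
        then have "E ?B' (add ?B' c d)" by (rule less.IH[rotated]) (simp add: k k')
        moreover have "add ?B' c d = add (add B c d) x d"
          using comm cd irrefl xd by metis
        moreover have "E (add B c d) (add (add B c d) x d)"
          using step mono xd by blast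
        moreover have "E B ?B'" using step xd by blast
        ultimately show ?thesis using sym trans by metis
      qed
    qed
  qed
qed

lemma mat_move_equiv_sym: "mat_move_equiv n A A' \<Longrightarrow> mat_move_equiv n A' A"
  unfolding mat_move_equiv_def by (rule move_equiv_sym)

lemma mat_move_equiv_trans: "mat_move_equiv n A A' \<Longrightarrow> mat_move_equiv n A' A'' \<Longrightarrow> mat_move_equiv n A A''"
  unfolding mat_move_equiv_def by (rule move_equiv_trans)

lemma JplusB_add_column_along_path:
  assumes "(c, d) \<in> (offdiag_edges n (JplusB n m B))\<^sup>*" "c \<noteq> d"
  shows "mat_move_equiv n (JplusB n m B) (JplusB n m (add_column B c d))"
proof (rule equiv_add_along_path[where E = "\<lambda>B B'. mat_move_equiv n (JplusB n m B) (JplusB n m B')"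
      and R = "\<lambda>B. offdiag_edges n (JplusB n m B)" and add = add_column])
  show "offdiag_edges n (JplusB n m B) \<subseteq> offdiag_edges n (JplusB n m (add_column B x d))" for B x d
    by (auto simp: offdiag_edges_def JplusB_def J_mat_def add_column_def zero_enat_def)
  show "(y, d) \<in> offdiag_edges n (JplusB n m (add_column B x d))"
    if "(x, d) \<in> offdiag_edges n (JplusB n m B)" "(y, x) \<in> offdiag_edges n (JplusB n m B)" "y \<noteq> d"
    for B x y d
    using that by (auto simp: offdiag_edges_def JplusB_def J_mat_def add_column_def zero_enat_def split: if_splits)
  show "add_column (add_column B x d) c d = add_column (add_column B c d) x d"
    if "c \<noteq> d" "x \<noteq> d" for B c x d
    using that by (auto simp: add_column_def fun_eq_iff)
qed (use assms in \<open>auto simp: offdiag_edges_def intro: mat_move_equiv_sym mat_move_equiv_trans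
  JplusB_add_column_step\<close>)

lemma JplusB_add_row_along_path:
  assumes "(b, a) \<in> (offdiag_edges m (JplusB n m B))\<^sup>*" "a \<noteq> b" "m \<le> n"
  shows "mat_move_equiv n (JplusB n m B) (JplusB n m (add_row B a b))"
proof (rule equiv_add_along_path[where E = "\<lambda>B B'. mat_move_equiv n (JplusB n m B) (JplusB n m B')"
      and R = "\<lambda>B. (offdiag_edges m (JplusB n m B))\<inverse>" and add = add_row])
  show "(offdiag_edges m (JplusB n m B))\<inverse> \<subseteq> (offdiag_edges m (JplusB n m (add_row B x d)))\<inverse>" for B x d
    by (auto simp: offdiag_edges_def JplusB_def J_mat_def add_row_def zero_enat_def)
  show "(y, d) \<in> (offdiag_edges m (JplusB n m (add_row B x d)))\<inverse>"
    if "(x, d) \<in> (offdiag_edges m (JplusB n m B))\<inverse>" "(y, x) \<in> (offdiag_edges m (JplusB n m B))\<inverse>" "y \<noteq> d"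
    for B x y d
    using that by (auto simp: offdiag_edges_def JplusB_def J_mat_def add_row_def zero_enat_def)
  show "add_row (add_row B x d) c d = add_row (add_row B c d) x d"
    if "c \<noteq> d" "x \<noteq> d" for B c x d
    using that by (auto simp: add_row_def fun_eq_iff)
  show "(a, b) \<in> ((offdiag_edges m (JplusB n m B))\<inverse>)\<^sup>*"
    using assms(1) by (simp add: rtrancl_converse)
qed (use assms in \<open>auto simp: offdiag_edges_def intro: mat_move_equiv_sym mat_move_equiv_trans
  JplusB_add_row_step\<close>)

theorem proposition7p3:
  fixes n m :: nat and B B' :: "nat \<Rightarrow> nat \<Rightarrow> nat"
  assumes "m \<le> n"
    and "\<forall>i j. m \<le> i \<and> i < n \<and> j < n \<longrightarrow> B i j = 0"
    and "irreducible_mat n (JplusB n m B)"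
    and "irreducible_mat m (JplusB n m B)"
    and "(\<exists>c d. c < n \<and> d < n \<and> c \<noteq> d \<and> B' = add_column B c d) \<or>
         (\<exists>a b. a < n \<and> b < n \<and> a \<noteq> b \<and> nonzero_row n B a \<and> nonzero_row n B b \<and> B' = add_row B a b)"
  shows "mat_move_equiv n (JplusB n m B) (JplusB n m B')"
  using assms(5)
proof (elim disjE exE conjE)
  fix c d assume "c < n" "d < n" "c \<noteq> d" "B' = add_column B c d"
  then show ?thesis
    using rtrancl_offdiag_edges_if_irreducible[OF assms(3)] JplusB_add_column_along_path by blast
next
  fix a b assume ab: "a < n" "b < n" "a \<noteq> b" "nonzero_row n B a" "nonzero_row n B b" and B': "B' = add_row B a b"
  have "a < m" "b < m"
    using ab assms(2) unfolding nonzero_row_def by (meson not_less)+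
  then show ?thesis
    using rtrancl_offdiag_edges_if_irreducible[OF assms(4)] JplusB_add_row_along_path assms(1) ab(3) B'
    by blast
qed

end
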